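(* Let $\lambda>0$, let $\Theta$ be a set (of market scenarios), and let $\eta:\mathbb{R}^n\times\Theta\to\mathbb{R}$, $\xi:\mathbb{R}^n\times\Theta\to\mathbb{R}^n$ be given. For $\alpha\in\mathbb{R}^n$, $\theta\in\Theta$ and a function $\psi(t,x)$ of class $C^{1,2}$ define $$\mathcal{L}^{\alpha,\theta}\psi(t,x)=\psi_t(t,x)+\eta(\alpha,\theta)\psi_x(t,x)+\tfrac12\|\xi(\alpha,\theta)\|_2^2\,\psi_{xx}(t,x),\qquad \mathcal{H}^{\alpha,\theta}\psi(t,x)=\|\xi(\alpha,\theta)\|_2^2\,\psi_x^2(t,x).$$ Let $\hat\alpha(t,x)\in\mathbb{R}^n$ and $\hat\theta(t,x)\in\Theta$ be given (feedback) functions. Consider System (I) for $(V,g)$: $$\sup_{\alpha\in\mathbb{R}^n}\inf_{\theta\in\Theta}\{\mathcal{L}^{\alpha,\theta}V(t,x)-\lambda\mathcal{H}^{\alpha,\theta}g(t,x)\}=\mathcal{L}^{\hat\alpha,\hat\theta}V(t,x)-\lambda\mathcal{H}^{\hat\alpha,\hat\theta}g(t,x)=0,\quad \mathcal{L}^{\hat\alpha,\hat\theta}g(t,x)=0,\quad V(T,x)=x,\quad g(T,x)=x,$$ and System (II) for $(f,g)$: $$\sup_{\alpha\in\mathbb{R}^n}\inf_{\theta\in\Theta}\{\mathcal{L}^{\alpha,\theta}f(t,x)+2\lambda g(t,x)\mathcal{L}^{\alpha,\theta}g(t,x)\}=\mathcal{L}^{\hat\alpha,\hat\theta}f(t,x)+2\lambda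 g(t,x)\mathcal{L}^{\hat\alpha,\hat\theta}g(t,x)=0,$$ $$\mathcal{L}^{\hat\alpha,\hat\theta}f(t,x)=0,\quad \mathcal{L}^{\hat\alpha,\hat\theta}g(t,x)=0,\quad f(T,x)=x-\lambda x^2,\quad g(T,x)=x.$$ Then: (1) if $(V,g)$ is a solution of System (I) with $V,g\in C^{1,2}$ in $(t,x)$, then $(f,g)$ with $f:=V-\lambda g^2$ is a solution of System (II); (2) if $(f,g)$ is a solution of System (II) with $f,g\in C^{1,2}$ in $(t,x)$, then $(V,g)$ with $V:=f+\lambda g^2$ is a solution of System (I).
   Context: These PDE systems arise from the robust dynamic mean-variance problem with wealth dynamics $dX_s=\eta(\alpha_s,\theta_s)ds+\xi(\alpha_s,\theta_s)\cdot d\mathcal{B}_s$ on $[t,T]$ and objective $E_t[X_T]-\lambda\,\mathrm{Var}_t(X_T)$; $\hat\alpha$ is a candidate equilibrium strategy and $\hat\theta$ the corresponding worst-case scenario. *)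

theory Defs
  imports "HOL-Analysis.Analysis"
begin

definition pt :: "(real \<Rightarrow> real \<Rightarrow> real) \<Rightarrow> real \<Rightarrow> real \<Rightarrow> real" where
  "pt \<psi> t x = deriv (\<lambda>s. \<psi> s x) t"

definition px :: "(real \<Rightarrow> real \<Rightarrow> real) \<Rightarrow> real \<Rightarrow> real \<Rightarrow> real" where
  "px \<psi> t x = deriv (\<lambda>y. \<psi> t y) x"

definition pxx :: "(real \<Rightarrow> real \<Rightarrow> real) \<Rightarrow> real \<Rightarrow> real \<Rightarrow> real" where
  "pxx \<psi> t x = deriv (\<lambda>y. px \<psi> t y) x"

definition C12_on :: "(real \<times> real) set \<Rightarrow> (real \<Rightarrow> real \<Rightarrow> real) \<Rightarrow> bool" where
  "C12_on D \<psi> \<longleftrightarrow>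
     (\<forall>(t,x)\<in>D. (\<lambda>s. \<psi> s x) differentiable (at t)
                 \<and> (\<lambda>y. \<psi> t y) differentiable (at x)
                 \<and> (\<lambda>y. px \<psi> t y) differentiable (at x))
   \<and> continuous_on D (\<lambda>(t,x). \<psi> t x)
   \<and> continuous_on D (\<lambda>(t,x). pt \<psi> t x)
   \<and> continuous_on D (\<lambda>(t,x). px \<psi> t x)
   \<and> continuous_on D (\<lambda>(t,x). pxx \<psi> t x)"

definition LL :: "('a \<Rightarrow> 'th \<Rightarrow> real) \<Rightarrow> ('a \<Rightarrow> 'th \<Rightarrow> real^'n) \<Rightarrow> 'a \<Rightarrow> 'th
    \<Rightarrow> (real \<Rightarrow> real \<Rightarrow> real) \<Rightarrow> real \<Rightarrow> real \<Rightarrow> real" where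
  "LL \<eta> \<xi> a th \<psi> t x = pt \<psi> t x + \<eta> a th * px \<psi> t x
      + (1/2) * (norm (\<xi> a th))\<^sup>2 * pxx \<psi> t x"

definition HH :: "('a \<Rightarrow> 'th \<Rightarrow> real^'n) \<Rightarrow> 'a \<Rightarrow> 'th
    \<Rightarrow> (real \<Rightarrow> real \<Rightarrow> real) \<Rightarrow> real \<Rightarrow> real \<Rightarrow> real" where
  "HH \<xi> a th \<psi> t x = (norm (\<xi> a th))\<^sup>2 * (px \<psi> t x)\<^sup>2"

definition SystemI ::
  "real \<Rightarrow> real \<Rightarrow> 'th set \<Rightarrow> (real^'n \<Rightarrow> 'th \<Rightarrow> real) \<Rightarrow> (real^'n \<Rightarrow> 'th \<Rightarrow> real^'n)
   \<Rightarrow> (real \<Rightarrow> real \<Rightarrow> real^'n) \<Rightarrow> (real \<Rightarrow> real \<Rightarrow> 'th)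
   \<Rightarrow> (real \<Rightarrow> real \<Rightarrow> real) \<Rightarrow> (real \<Rightarrow> real \<Rightarrow> real) \<Rightarrow> bool" where
  "SystemI lam T \<Theta> \<eta> \<xi> ah thh V g \<longleftrightarrow>
     (\<forall>t\<in>{0<..<T}. \<forall>x.
        (SUP a. INF th\<in>\<Theta>. ereal (LL \<eta> \<xi> a th V t x - lam * HH \<xi> a th g t x))
          = ereal (LL \<eta> \<xi> (ah t x) (thh t x) V t x - lam * HH \<xi> (ah t x) (thh t x) g t x)
      \<and> LL \<eta> \<xi> (ah t x) (thh t x) V t x - lam * HH \<xi> (ah t x) (thh t x) g t x = 0
      \<and> LL \<eta> \<xi> (ah t x) (thh t x) g t x = 0)
   \<and> (\<forall>x. V T x = x) \<and> (\<forall>x. g T x = x)"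

definition SystemII ::
  "real \<Rightarrow> real \<Rightarrow> 'th set \<Rightarrow> (real^'n \<Rightarrow> 'th \<Rightarrow> real) \<Rightarrow> (real^'n \<Rightarrow> 'th \<Rightarrow> real^'n)
   \<Rightarrow> (real \<Rightarrow> real \<Rightarrow> real^'n) \<Rightarrow> (real \<Rightarrow> real \<Rightarrow> 'th)
   \<Rightarrow> (real \<Rightarrow> real \<Rightarrow> real) \<Rightarrow> (real \<Rightarrow> real \<Rightarrow> real) \<Rightarrow> bool" where
  "SystemII lam T \<Theta> \<eta> \<xi> ah thh f g \<longleftrightarrow>
     (\<forall>t\<in>{0<..<T}. \<forall>x.
        (SUP a. INF th\<in>\<Theta>. ereal (LL \<eta> \<xi> a th f t x + 2 * lam * g t x * LL \<eta> \<xi> a th g t x))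
          = ereal (LL \<eta> \<xi> (ah t x) (thh t x) f t x
                   + 2 * lam * g t x * LL \<eta> \<xi> (ah t x) (thh t x) g t x)
      \<and> LL \<eta> \<xi> (ah t x) (thh t x) f t x
          + 2 * lam * g t x * LL \<eta> \<xi> (ah t x) (thh t x) g t x = 0
      \<and> LL \<eta> \<xi> (ah t x) (thh t x) f t x = 0
      \<and> LL \<eta> \<xi> (ah t x) (thh t x) g t x = 0)
   \<and> (\<forall>x. f T x = x - lam * x\<^sup>2) \<and> (\<forall>x. g T x = x)"

end

theory Submission
  imports Defs
begin

text \<open>For every \<psi>, \<phi> of class C^{1,2} and every constant c, the product rule gives
  L(\<psi> + c \<phi>^2) = L \<psi> + c (2 \<phi> L \<phi> + H \<phi>) for each control and each scenario, the term H \<phi>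
  coming from the second derivative of \<phi>^2. With c = -\<lambda> this says that
  L V - \<lambda> H g = L f + 2 \<lambda> g L g whenever f = V - \<lambda> g^2, so the Hamiltonians of the two
  systems agree pointwise in (\<alpha>, \<theta>): their sup-inf, their values at (\<alpha>^, \<theta>^) and hence the
  equilibrium equations coincide, while L f = 0 follows from L V - \<lambda> H g = 0 and L g = 0.\<close>

lemma deriv_add_scaled_square:
  fixes f g :: "real \<Rightarrow> real"
  assumes "f differentiable at t" and "g differentiable at t"
  shows "deriv (\<lambda>s. f s + c * (g s)\<^sup>2) t = deriv f t + c * (2 * g t * deriv g t)"
proof (rule DERIV_imp_deriv)
  have "(f has_real_derivative deriv f t) (at t)" and "(g has_real_derivative deriv g t) (at t)"
    using assms by (simp_all add: DERIV_deriv_iff_real_differentiable)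
  then show "((\<lambda>s. f s + c * (g s)\<^sup>2) has_real_derivative deriv f t + c * (2 * g t * deriv g t)) (at t)"
    by (auto intro!: derivative_eq_intros)
qed

lemma deriv_add_scaled_double_mult:
  fixes f g h :: "real \<Rightarrow> real"
  assumes "f differentiable at t" and "g differentiable at t" and "h differentiable at t"
  shows "deriv (\<lambda>s. f s + c * (2 * g s * h s)) t
           = deriv f t + c * (2 * (deriv g t * h t + g t * deriv h t))"
proof (rule DERIV_imp_deriv)
  have "(f has_real_derivative deriv f t) (at t)" and "(g has_real_derivative deriv g t) (at t)"
    and "(h has_real_derivative deriv h t) (at t)"
    using assms by (simp_all add: DERIV_deriv_iff_real_differentiable)
  then show "((\<lambda>s. f s + c * (2 * g s * h s)) has_real_derivative
               deriv f t + c * (2 * (deriv g t * h t + g t * deriv h t))) (at t)"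
    by (auto intro!: derivative_eq_intros simp: algebra_simps)
qed

lemma LL_add_scaled_square:
  assumes \<psi>: "C12_on D \<psi>" and \<phi>: "C12_on D \<phi>" and line: "\<And>y. (t, y) \<in> D"
  shows "LL \<eta> \<xi> a th (\<lambda>t x. \<psi> t x + c * (\<phi> t x)\<^sup>2) t x
           = LL \<eta> \<xi> a th \<psi> t x + c * (2 * \<phi> t x * LL \<eta> \<xi> a th \<phi> t x + HH \<xi> a th \<phi> t x)"
proof -
  have diff: "(\<lambda>s. F s y) differentiable at t" "(\<lambda>y. F t y) differentiable at y"
      "(\<lambda>y. px F t y) differentiable at y" if "F = \<psi> \<or> F = \<phi>" for F y
    using that \<psi> \<phi> line[of y] unfolding C12_on_def by fastforce+
  have pt_sq: "pt (\<lambda>t x. \<psi> t x + c * (\<phi> t x)\<^sup>2) t x = pt \<psi> t x + c * (2 * \<phi> t x * pt \<phi> t x)"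
    unfolding pt_def using diff by (simp add: deriv_add_scaled_square)
  have px_sq: "px (\<lambda>t x. \<psi> t x + c * (\<phi> t x)\<^sup>2) t y = px \<psi> t y + c * (2 * \<phi> t y * px \<phi> t y)" for y
    unfolding px_def using diff by (simp add: deriv_add_scaled_square)
  have pxx_sq: "pxx (\<lambda>t x. \<psi> t x + c * (\<phi> t x)\<^sup>2) t x
      = pxx \<psi> t x + c * (2 * (px \<phi> t x * px \<phi> t x + \<phi> t x * pxx \<phi> t x))"
    unfolding pxx_def px_sq
    using deriv_add_scaled_double_mult[of "px \<psi> t" x "\<phi> t" "px \<phi> t" c] diff
    by (simp add: px_def[symmetric])
  show ?thesis
    unfolding LL_def HH_def pt_sq px_sq pxx_sq by (simp add: algebra_simps power2_eq_square)
qed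

lemma SystemII_of_SystemI:
  assumes "C12_on ({0<..<T} \<times> UNIV) V" and "C12_on ({0<..<T} \<times> UNIV) g"
    and I: "SystemI lam T \<Theta> \<eta> \<xi> ah thh V g"
  shows "SystemII lam T \<Theta> \<eta> \<xi> ah thh (\<lambda>t x. V t x - lam * (g t x)\<^sup>2) g"
proof -
  have hamiltonian:
    "LL \<eta> \<xi> a th (\<lambda>t x. V t x - lam * (g t x)\<^sup>2) t x + 2 * lam * g t x * LL \<eta> \<xi> a th g t x
       = LL \<eta> \<xi> a th V t x - lam * HH \<xi> a th g t x" if "t \<in> {0<..<T}" for a th t x
    using LL_add_scaled_square[OF assms(1,2), of t \<eta> \<xi> a th "-lam" x] that
    by (simp add: algebra_simps)
  then have "LL \<eta> \<xi> a th (\<lambda>t x. V t x - lam * (g t x)\<^sup>2) t x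
       = (LL \<eta> \<xi> a th V t x - lam * HH \<xi> a th g t x) - 2 * lam * g t x * LL \<eta> \<xi> a th g t x"
    if "t \<in> {0<..<T}" for a th t x
    using that by (simp add: algebra_simps)
  with I hamiltonian show ?thesis
    unfolding SystemI_def SystemII_def by simp
qed

lemma SystemI_of_SystemII:
  assumes "C12_on ({0<..<T} \<times> UNIV) f" and "C12_on ({0<..<T} \<times> UNIV) g"
    and II: "SystemII lam T \<Theta> \<eta> \<xi> ah thh f g"
  shows "SystemI lam T \<Theta> \<eta> \<xi> ah thh (\<lambda>t x. f t x + lam * (g t x)\<^sup>2) g"
proof -
  have hamiltonian:
    "LL \<eta> \<xi> a th (\<lambda>t x. f t x + lam * (g t x)\<^sup>2) t x - lam * HH \<xi> a th g t x
       = LL \<eta> \<xi> a th f t x + 2 * lam * g t x * LL \<eta> \<xi> a th g t x" if "t \<in> {0<..<T}" for a th t x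
    using LL_add_scaled_square[OF assms(1,2), of t \<eta> \<xi> a th lam x] that
    by (simp add: algebra_simps)
  with II show ?thesis
    unfolding SystemI_def SystemII_def by simp
qed

theorem proposition1:
  fixes lam T :: real and \<Theta> :: "'th set"
    and \<eta> :: "real^'n \<Rightarrow> 'th \<Rightarrow> real" and \<xi> :: "real^'n \<Rightarrow> 'th \<Rightarrow> real^'n"
    and ah :: "real \<Rightarrow> real \<Rightarrow> real^'n" and thh :: "real \<Rightarrow> real \<Rightarrow> 'th"
  assumes "lam > 0"
    and "\<And>t x. thh t x \<in> \<Theta>"
  shows "(\<forall>V g. C12_on ({0<..<T} \<times> UNIV) V \<and> C12_on ({0<..<T} \<times> UNIV) g
              \<and> SystemI lam T \<Theta> \<eta> \<xi> ah thh V g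
            \<longrightarrow> SystemII lam T \<Theta> \<eta> \<xi> ah thh (\<lambda>t x. V t x - lam * (g t x)\<^sup>2) g)
       \<and> (\<forall>f g. C12_on ({0<..<T} \<times> UNIV) f \<and> C12_on ({0<..<T} \<times> UNIV) g
              \<and> SystemII lam T \<Theta> \<eta> \<xi> ah thh f g
            \<longrightarrow> SystemI lam T \<Theta> \<eta> \<xi> ah thh (\<lambda>t x. f t x + lam * (g t x)\<^sup>2) g)"
  using SystemII_of_SystemI SystemI_of_SystemII by blast

end
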